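(* Consider a single base station and $N=2$ users. At each slot $t=1,2,\ldots$, one of the two users is chosen uniformly at random, independently across slots, to have a \textsf{Good} channel, and the other has a \textsf{Bad} channel. At each slot the base station schedules exactly one user via an online policy $\pi$: the decision at slot $t$ is measurable with respect to the sigma-algebra generated by the ages and scheduling decisions up to slot $t-1$ (so it does not know the current channel states). The ages evolve as $h_i(t+1)=1$ if $\mathrm{UE}_i$ was scheduled at slot $t$ and its channel was \textsf{Good} at slot $t$, and $h_i(t+1)=h_i(t)+1$ otherwise. Let $H_{\mathrm{sum}}(t)=\mathbb{E}^\pi[h_1(t)]+\mathbb{E}^\pi[h_2(t)]$. Then for every online policy $\pi$, $\limsup_{T\to\infty}\frac{1}{T}\sum_{t=1}^{T}H_{\mathrm{sum}}(t)\ge 6$.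
   Context: Each scheduled transmission thus succeeds with probability $p_1=p_2=1/2$. The quantity bounded is the time-averaged expected sum of the two users' ages. *)

theory Defs
  imports "HOL-Probability.Probability"
begin

text \<open>A channel outcome at a slot is a bool: True means user 1 has the
Good channel (user 2 Bad), False means user 2 Good (user 1 Bad).
A scheduling decision is a bool: True means user 1 is scheduled, False user 2.
Ages are a pair (h1, h2).\<close>

type_synonym ages = "nat \<times> nat"

text \<open>An online (deterministic) policy: the decision at slot t is a function of the
history ((h(s), u(s)) for s = 1..t-1) together with the current ages h(t);
it never sees the current (or any) channel state directly.\<close>

type_synonym policy = "(ages \<times> bool) list \<Rightarrow> ages \<Rightarrow> bool"

definition age_update :: "bool \<Rightarrow> bool \<Rightarrow> ages \<Rightarrow> ages" where
  "age_update u c a =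
     (if u \<and> c then (1, snd a + 1)
      else if \<not> u \<and> \<not> c then (fst a + 1, 1)
      else (fst a + 1, snd a + 1))"

definition step :: "policy \<Rightarrow> (ages \<times> bool) list \<times> ages \<Rightarrow> bool \<Rightarrow> (ages \<times> bool) list \<times> ages" where
  "step \<pi> st c = (let H = fst st; a = snd st; u = \<pi> H a in (H @ [(a, u)], age_update u c a))"

definition run :: "policy \<Rightarrow> ages \<Rightarrow> bool list \<Rightarrow> (ages \<times> bool) list \<times> ages" where
  "run \<pi> h0 cs = foldl (step \<pi>) ([], h0) cs"

text \<open>Expected sum of ages at slot t (t \<ge> 1), with initial ages h0 at slot 1; the
channel outcomes of slots 1..t-1 are i.i.d. uniform, i.e. uniform over bool lists
of length t-1.\<close>

definition Hsum :: "policy \<Rightarrow> ages \<Rightarrow> nat \<Rightarrow> real" where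
  "Hsum \<pi> h0 t = measure_pmf.expectation (pmf_of_set {cs :: bool list. length cs = t - 1})
      (\<lambda>cs. real (fst (snd (run \<pi> h0 cs))) + real (snd (snd (run \<pi> h0 cs))))"

end

theory Submission
  imports Defs
begin

text \<open>The scheduler does not see the current channel, so whatever it decides, the scheduled
user's transmission succeeds with probability 1/2: a success resets that user's age to 1
while the other age grows, a failure increments both ages. If both ages are at least p and
their sum at least p + q, the expected age sum n slots later is therefore at least
b n p q, where b 0 p q = p + q and b (n+1) p q = (b n 1 (p+1) + b n (p+1) (q+1)) / 2.
Solving the recursion gives b n 0 0 = 6 - (2n + 6) / 2^n, whose Cesaro means tend to 6.\<close>

lemma sum_bool_lists_length_Suc:
  fixes f :: "bool list \<Rightarrow> 'a::comm_monoid_add"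
  shows "(\<Sum>cs | length cs = Suc n. f cs) = (\<Sum>cs | length cs = n. f (True # cs) + f (False # cs))"
proof -
  let ?L = "{cs :: bool list. length cs = n}"
  have split: "{cs :: bool list. length cs = Suc n} = Cons True ` ?L \<union> Cons False ` ?L"
    by (auto simp: length_Suc_conv)
  have "(\<Sum>cs | length cs = Suc n. f cs) = (\<Sum>cs\<in>Cons True ` ?L. f cs) + (\<Sum>cs\<in>Cons False ` ?L. f cs)"
    unfolding split by (rule sum.union_disjoint) (auto simp: finite_list_length)
  then show ?thesis
    by (simp add: sum.reindex sum.distrib)
qed

lemma card_bool_lists_length: "card {cs :: bool list. length cs = n} = 2 ^ n"
  using card_lists_length_eq[of "UNIV :: bool set" n] by simp

definition age_sum :: "ages \<Rightarrow> real" where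
  "age_sum a = real (fst a) + real (snd a)"

definition expected_age_sum :: "policy \<Rightarrow> nat \<Rightarrow> (ages \<times> bool) list \<times> ages \<Rightarrow> real" where
  "expected_age_sum \<pi> n st = (\<Sum>cs | length cs = n. age_sum (snd (foldl (step \<pi>) st cs))) / 2 ^ n"

lemma expected_age_sum_0: "expected_age_sum \<pi> 0 st = age_sum (snd st)"
  by (simp add: expected_age_sum_def)

lemma expected_age_sum_Suc:
  "expected_age_sum \<pi> (Suc n) st =
     (expected_age_sum \<pi> n (step \<pi> st True) + expected_age_sum \<pi> n (step \<pi> st False)) / 2"
  by (simp add: expected_age_sum_def sum_bool_lists_length_Suc sum.distrib add_divide_distrib)

lemma Hsum_eq_expected_age_sum: "Hsum \<pi> h0 (Suc n) = expected_age_sum \<pi> n ([], h0)"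
proof -
  have "{cs :: bool list. length cs = n} \<noteq> {}"
    using Ex_list_of_length by blast
  then show ?thesis
    by (simp add: Hsum_def expected_age_sum_def integral_pmf_of_set finite_list_length
        card_bool_lists_length age_sum_def run_def)
qed

lemma age_update_success: "age_update u u a = (if u then (1, snd a + 1) else (fst a + 1, 1))"
  by (simp add: age_update_def)

lemma age_update_failure: "age_update u (\<not> u) a = (fst a + 1, snd a + 1)"
  by (simp add: age_update_def)

definition age_sum_bound :: "nat \<Rightarrow> real \<Rightarrow> real \<Rightarrow> real" where
  "age_sum_bound n p q = 6 - (2 * real n + 6) / 2 ^ n + (real n + 1) / 2 ^ n * p + q / 2 ^ n"

lemma age_sum_bound_0: "age_sum_bound 0 p q = p + q"
  by (simp add: age_sum_bound_def)

lemma age_sum_bound_Suc: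
  "age_sum_bound (Suc n) p q = (age_sum_bound n 1 (p + 1) + age_sum_bound n (p + 1) (q + 1)) / 2"
  by (simp add: age_sum_bound_def field_simps)

lemma expected_age_sum_ge_age_sum_bound:
  fixes p q :: nat
  assumes "p \<le> min (fst (snd st)) (snd (snd st))" and "p + q \<le> fst (snd st) + snd (snd st)"
  shows "age_sum_bound n p q \<le> expected_age_sum \<pi> n st"
  using assms
proof (induction n arbitrary: st p q)
  case 0
  then show ?case
    by (simp add: age_sum_bound_0 expected_age_sum_0 age_sum_def)
next
  case (Suc n)
  define u where "u = \<pi> (fst st) (snd st)"
  have step_eq: "step \<pi> st c = (fst st @ [(snd st, u)], age_update u c (snd st))" for c
    by (simp add: step_def u_def Let_def)
  have success: "age_sum_bound n 1 (p + 1) \<le> expected_age_sum \<pi> n (step \<pi> st u)"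
    using Suc.IH[where st = "step \<pi> st u" and p = 1 and q = "p + 1"] Suc.prems
    by (simp add: step_eq age_update_success)
  have failure: "age_sum_bound n (p + 1) (q + 1) \<le> expected_age_sum \<pi> n (step \<pi> st (\<not> u))"
    using Suc.IH[where st = "step \<pi> st (\<not> u)" and p = "p + 1" and q = "q + 1"] Suc.prems
    by (simp add: step_eq age_update_failure)
  \<comment> \<open>u does not depend on the channel, so one outcome is a success and the other a failure\<close>
  have "expected_age_sum \<pi> (Suc n) st =
      (expected_age_sum \<pi> n (step \<pi> st u) + expected_age_sum \<pi> n (step \<pi> st (\<not> u))) / 2"
    by (cases u) (simp_all add: expected_age_sum_Suc)
  then show ?case
    using success failure by (simp add: age_sum_bound_Suc algebra_simps)
qed

lemma sum_age_sum_bound: "(\<Sum>n<T. age_sum_bound n 0 0) = 6 * real T - 16 + (4 * real T + 16) / 2 ^ T"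
proof (induction T)
  case 0
  then show ?case by simp
next
  case (Suc T)
  have "(4 * real T + 16) / 2 ^ T - (2 * real T + 6) / 2 ^ T = (4 * real (Suc T) + 16) / 2 ^ Suc T"
    by (simp add: field_simps)
  with Suc show ?case
    by (simp add: age_sum_bound_def)
qed

lemma average_Hsum_ge:
  assumes "T \<ge> 1"
  shows "6 - 16 / real T \<le> (\<Sum>t\<in>{1..T}. Hsum \<pi> h0 t) / real T"
proof -
  have "(\<Sum>t\<in>{1..T}. Hsum \<pi> h0 t) = (\<Sum>n<T. Hsum \<pi> h0 (Suc n))"
    by (induction T) simp_all
  also have "\<dots> \<ge> (\<Sum>n<T. age_sum_bound n 0 0)"
    using expected_age_sum_ge_age_sum_bound[of 0 "([], h0)" 0]
    by (intro sum_mono) (simp add: Hsum_eq_expected_age_sum)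
  also have "(\<Sum>n<T. age_sum_bound n 0 0) \<ge> 6 * real T - 16"
    unfolding sum_age_sum_bound by simp
  finally have "(6 * real T - 16) / real T \<le> (\<Sum>t\<in>{1..T}. Hsum \<pi> h0 t) / real T"
    using assms by (intro divide_right_mono) auto
  then show ?thesis
    using assms by (simp add: diff_divide_distrib)
qed

theorem proposition1:
  fixes \<pi> :: policy and h0 :: ages
  shows "limsup (\<lambda>T::nat. ereal ((\<Sum>t\<in>{1..T}. Hsum \<pi> h0 t) / real T)) \<ge> 6"
proof -
  have "((\<lambda>T::nat. 6 - 16 / real T) \<longlongrightarrow> 6 - 0) sequentially"
    by (intro tendsto_intros tendsto_divide_0[OF tendsto_const] filterlim_real_sequentially)
  then have "limsup (\<lambda>T::nat. ereal (6 - 16 / real T)) = 6"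
    by (intro lim_imp_Limsup) (simp_all add: tendsto_ereal)
  moreover have "limsup (\<lambda>T::nat. ereal (6 - 16 / real T)) \<le>
      limsup (\<lambda>T::nat. ereal ((\<Sum>t\<in>{1..T}. Hsum \<pi> h0 t) / real T))"
    by (intro Limsup_mono eventually_sequentiallyI[of 1]) (simp only: ereal_less_eq(3) average_Hsum_ge)
  ultimately show ?thesis
    by simp
qed

end
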